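(* Let $S$ be a semiring and let $L\xrightarrow{f}M\xrightarrow{g}N$ be $S$-linear maps of left $S$-semimodules. (1) Suppose $g$ is injective. (a) $f$ is $k$-normal if and only if $g\circ f$ is $k$-normal. (b) If $g\circ f$ is $i$-normal (resp. normal), then $f$ is $i$-normal (resp. normal). (c) If moreover $g$ is $i$-normal, then $f$ is $i$-normal (resp. normal) if and only if $g\circ f$ is $i$-normal (resp. normal). (2) Suppose $f$ is surjective. (a) $g$ is $i$-normal if and only if $g\circ f$ is $i$-normal. (b) If $g\circ f$ is $k$-normal (resp. normal), then $g$ is $k$-normal (resp. normal). (c) If moreover $f$ is $k$-normal, then $g$ is $k$-normal (resp. normal) if and only if $g\circ f$ is $k$-normal (resp. normal).
   Context: A semiring $(S,+,0,\cdot,1)$ consists of a commutative monoid $(S,+,0)$ and a monoid $(S,\cdot,1)$ with $0\neq 1$, absorbing zero and both distributive laws; left $S$-semimodules and $S$-linear maps are as for modules over rings (without subtraction). For an $S$-linear map $h:X\to Y$, $\mathrm{Ker}(h)=\{x\in X\mid h(x)=0\}$. $h$ is $k$-normal if $h(x)=h(x')$ implies $x+k=x'+k'$ for some $k,k'\in\mathrm{Ker}(h)$; $h$ is $i$-normal if $h(X)=\overline{h(X)}$, where $\overline{h(X)}=\{y\in Y\mid y+h(x_1)=h(x_2)\text{ for some }x_1,x_2\in X\}$; $h$ is normal if it is both $k$-normal and $i$-normal. *)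

theory Defs
  imports Main
begin

definition semimodule :: "('s::semiring_1 \<Rightarrow> 'x::comm_monoid_add \<Rightarrow> 'x) \<Rightarrow> bool" where
  "semimodule act \<longleftrightarrow>
     (\<forall>s t x. act (s * t) x = act s (act t x)) \<and>
     (\<forall>s t x. act (s + t) x = act s x + act t x) \<and>
     (\<forall>s x y. act s (x + y) = act s x + act s y) \<and>
     (\<forall>x. act 1 x = x) \<and>
     (\<forall>x. act 0 x = 0) \<and>
     (\<forall>s. act s 0 = 0)"

definition s_linear ::
  "('s::semiring_1 \<Rightarrow> 'x::comm_monoid_add \<Rightarrow> 'x) \<Rightarrow> ('s \<Rightarrow> 'y::comm_monoid_add \<Rightarrow> 'y) \<Rightarrow> ('x \<Rightarrow> 'y) \<Rightarrow> bool" where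
  "s_linear actX actY h \<longleftrightarrow>
     (\<forall>x x'. h (x + x') = h x + h x') \<and> (\<forall>s x. h (actX s x) = actY s (h x))"

definition Ker :: "('x \<Rightarrow> 'y::zero) \<Rightarrow> 'x set" where
  "Ker h = {x. h x = 0}"

definition k_normal :: "('x::comm_monoid_add \<Rightarrow> 'y::comm_monoid_add) \<Rightarrow> bool" where
  "k_normal h \<longleftrightarrow>
     (\<forall>x x'. h x = h x' \<longrightarrow> (\<exists>k\<in>Ker h. \<exists>k'\<in>Ker h. x + k = x' + k'))"

definition img_closure :: "('x \<Rightarrow> 'y::comm_monoid_add) \<Rightarrow> 'y set" where
  "img_closure h = {y. \<exists>x1 x2. y + h x1 = h x2}"

definition i_normal :: "('x \<Rightarrow> 'y::comm_monoid_add) \<Rightarrow> bool" where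
  "i_normal h \<longleftrightarrow> range h = img_closure h"

definition normal :: "('x::comm_monoid_add \<Rightarrow> 'y::comm_monoid_add) \<Rightarrow> bool" where
  "normal h \<longleftrightarrow> k_normal h \<and> i_normal h"

end

theory Submission
  imports Defs
begin

text \<open>An injective \<open>g\<close>
  with \<open>g 0 = 0\<close> does not change kernels, and lets an equation \<open>g y + g (f x\<^sub>1) = g (f x\<^sub>2)\<close>
  in \<open>N\<close> be pulled back to \<open>y + f x\<^sub>1 = f x\<^sub>2\<close> in \<open>M\<close>; a surjective \<open>f\<close> does not change images
  or their closures, and lets kernel elements of \<open>g\<close> be lifted to kernel elements of
  \<open>g \<circ> f\<close>.\<close>

lemma s_linear_add: "s_linear aX aY h \<Longrightarrow> h (x + y) = h x + h y"
  unfolding s_linear_def by blast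

lemma s_linear_zero:
  assumes "semimodule aX" "semimodule aY" "s_linear aX aY h"
  shows "h 0 = 0"
proof -
  have "h (aX 0 0) = aY 0 (h 0)" using assms(3) unfolding s_linear_def by blast
  then show ?thesis using assms(1,2) unfolding semimodule_def by simp
qed

lemma range_subset_img_closure: "h 0 = 0 \<Longrightarrow> range h \<subseteq> img_closure h"
  unfolding img_closure_def by (auto, metis add.right_neutral)

lemma i_normal_iff_img_closure_subset:
  "h 0 = 0 \<Longrightarrow> i_normal h \<longleftrightarrow> img_closure h \<subseteq> range h"
  unfolding i_normal_def using range_subset_img_closure by blast

lemma Ker_comp_inj:
  assumes "inj g" "g 0 = 0"
  shows "Ker (g \<circ> f) = Ker f"
  using assms unfolding Ker_def by (auto, metis injD)

lemma k_normal_comp_inj_iff: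
  assumes "inj g" "g 0 = 0"
  shows "k_normal (g \<circ> f) \<longleftrightarrow> k_normal f"
  unfolding k_normal_def Ker_comp_inj[OF assms] using assms(1) by (auto dest: injD)

lemma i_normal_of_comp_inj:
  assumes "inj g" and g_add: "\<And>x y. g (x + y) = g x + g y" and "f 0 = 0"
    and "i_normal (g \<circ> f)"
  shows "i_normal f"
  unfolding i_normal_iff_img_closure_subset[of f, OF \<open>f 0 = 0\<close>]
proof
  fix y assume "y \<in> img_closure f"
  then obtain x\<^sub>1 x\<^sub>2 where "y + f x\<^sub>1 = f x\<^sub>2" unfolding img_closure_def by auto
  then have "g y + (g \<circ> f) x\<^sub>1 = (g \<circ> f) x\<^sub>2" by (simp flip: g_add)
  then have "g y \<in> range (g \<circ> f)"
    using \<open>i_normal (g \<circ> f)\<close> unfolding i_normal_def img_closure_def by blast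
  then show "y \<in> range f" using \<open>inj g\<close> by (auto dest: injD)
qed

lemma i_normal_comp_inj:
  assumes "inj g" and g_add: "\<And>x y. g (x + y) = g x + g y" and "g 0 = 0" "f 0 = 0"
    and "i_normal g" "i_normal f"
  shows "i_normal (g \<circ> f)"
proof -
  have "(g \<circ> f) 0 = 0" using \<open>g 0 = 0\<close> \<open>f 0 = 0\<close> by simp
  moreover have "img_closure (g \<circ> f) \<subseteq> range (g \<circ> f)"
  proof
    fix z assume "z \<in> img_closure (g \<circ> f)"
    then obtain x\<^sub>1 x\<^sub>2 where z: "z + g (f x\<^sub>1) = g (f x\<^sub>2)" unfolding img_closure_def by auto
    then have "z \<in> range g"
      using \<open>i_normal g\<close> unfolding i_normal_def img_closure_def by blast
    then obtain m where m: "z = g m" by auto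
    with z have "g (m + f x\<^sub>1) = g (f x\<^sub>2)" by (simp add: g_add)
    then have "m + f x\<^sub>1 = f x\<^sub>2" using \<open>inj g\<close> by (auto dest: injD)
    then have "m \<in> range f" using \<open>i_normal f\<close> unfolding i_normal_def img_closure_def by blast
    then show "z \<in> range (g \<circ> f)" using m by auto
  qed
  ultimately show ?thesis by (simp add: i_normal_iff_img_closure_subset)
qed

lemma i_normal_comp_surj_iff:
  assumes "surj f"
  shows "i_normal (g \<circ> f) \<longleftrightarrow> i_normal g"
proof -
  have "range (g \<circ> f) = range g" using assms by (metis image_comp)
  moreover have "img_closure (g \<circ> f) = img_closure g"
    unfolding img_closure_def using assms by simp (metis surjD)
  ultimately show ?thesis unfolding i_normal_def by simp
qed

lemma k_normal_of_comp_surj: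
  assumes "surj f" and f_add: "\<And>x y. f (x + y) = f x + f y" and "k_normal (g \<circ> f)"
  shows "k_normal g"
  unfolding k_normal_def
proof (intro allI impI)
  fix m m' assume "g m = g m'"
  obtain x x' where m: "m = f x" "m' = f x'" using \<open>surj f\<close> by (metis surjD)
  with \<open>g m = g m'\<close> obtain k k' where k: "k \<in> Ker (g \<circ> f)" "k' \<in> Ker (g \<circ> f)" "x + k = x' + k'"
    using \<open>k_normal (g \<circ> f)\<close> unfolding k_normal_def by force
  from k(3) have "m + f k = m' + f k'" unfolding m by (metis f_add)
  moreover have "f k \<in> Ker g" "f k' \<in> Ker g" using k unfolding Ker_def by auto
  ultimately show "\<exists>k\<in>Ker g. \<exists>k'\<in>Ker g. m + k = m' + k'" by blast
qed

lemma k_normal_comp_surj: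
  assumes "surj f" and f_add: "\<And>x y. f (x + y) = f x + f y"
    and "k_normal f" "k_normal g"
  shows "k_normal (g \<circ> f)"
  unfolding k_normal_def
proof (intro allI impI)
  fix x x' assume "(g \<circ> f) x = (g \<circ> f) x'"
  then obtain k k' where k: "k \<in> Ker g" "k' \<in> Ker g" "f x + k = f x' + k'"
    using \<open>k_normal g\<close> unfolding k_normal_def by force
  obtain a a' where a: "k = f a" "k' = f a'" using \<open>surj f\<close> by (metis surjD)
  have "f (x + a) = f (x' + a')" using k(3) unfolding a by (simp add: f_add)
  then obtain c c' where c: "c \<in> Ker f" "c' \<in> Ker f" "x + a + c = x' + a' + c'"
    using \<open>k_normal f\<close> unfolding k_normal_def by blast
  have "a + c \<in> Ker (g \<circ> f)" "a' + c' \<in> Ker (g \<circ> f)"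
    using c(1,2) k(1,2) unfolding a Ker_def by (simp_all add: f_add)
  moreover have "x + (a + c) = x' + (a' + c')" using c(3) by (simp add: add.assoc)
  ultimately show "\<exists>k\<in>Ker (g \<circ> f). \<exists>k'\<in>Ker (g \<circ> f). x + k = x' + k'" by blast
qed

theorem mainTheorem4:
  fixes actL :: "'s::semiring_1 \<Rightarrow> 'l::comm_monoid_add \<Rightarrow> 'l"
    and actM :: "'s \<Rightarrow> 'm::comm_monoid_add \<Rightarrow> 'm"
    and actN :: "'s \<Rightarrow> 'n::comm_monoid_add \<Rightarrow> 'n"
    and f :: "'l \<Rightarrow> 'm" and g :: "'m \<Rightarrow> 'n"
  assumes "semimodule actL" and "semimodule actM" and "semimodule actN"
    and "s_linear actL actM f" and "s_linear actM actN g"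
  shows "(inj g \<longrightarrow>
            (k_normal f \<longleftrightarrow> k_normal (g \<circ> f)) \<and>
            (i_normal (g \<circ> f) \<longrightarrow> i_normal f) \<and>
            (normal (g \<circ> f) \<longrightarrow> normal f) \<and>
            (i_normal g \<longrightarrow>
               (i_normal f \<longleftrightarrow> i_normal (g \<circ> f)) \<and>
               (normal f \<longleftrightarrow> normal (g \<circ> f))))
       \<and> (surj f \<longrightarrow>
            (i_normal g \<longleftrightarrow> i_normal (g \<circ> f)) \<and>
            (k_normal (g \<circ> f) \<longrightarrow> k_normal g) \<and>
            (normal (g \<circ> f) \<longrightarrow> normal g) \<and>
            (k_normal f \<longrightarrow>
               (k_normal g \<longleftrightarrow> k_normal (g \<circ> f)) \<and>
               (normal g \<longleftrightarrow> normal (g \<circ> f))))"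
proof -
  have f0: "f 0 = 0" and g0: "g 0 = 0" using s_linear_zero assms by blast+
  have f_add: "\<And>x y. f (x + y) = f x + f y" and g_add: "\<And>x y. g (x + y) = g x + g y"
    using s_linear_add assms(4,5) by blast+
  have "(k_normal f \<longleftrightarrow> k_normal (g \<circ> f)) \<and> (i_normal (g \<circ> f) \<longrightarrow> i_normal f) \<and>
        (i_normal g \<longrightarrow> i_normal f \<longrightarrow> i_normal (g \<circ> f))" if "inj g"
    using k_normal_comp_inj_iff[OF that g0] i_normal_of_comp_inj[of g f, OF that g_add f0]
      i_normal_comp_inj[of g f, OF that g_add g0 f0] by blast
  moreover have "(i_normal g \<longleftrightarrow> i_normal (g \<circ> f)) \<and> (k_normal (g \<circ> f) \<longrightarrow> k_normal g) \<and>
        (k_normal f \<longrightarrow> k_normal g \<longrightarrow> k_normal (g \<circ> f))" if "surj f"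
    using i_normal_comp_surj_iff[OF that] k_normal_of_comp_surj[of f g, OF that f_add]
      k_normal_comp_surj[of f g, OF that f_add] by blast
  ultimately show ?thesis unfolding normal_def by blast
qed

end
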